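(* Let $K=\{k_0,k_1,\dots,k_n\}$ be a finite set of alternatives, $K_*=K\setminus\{k_0\}$, $T_1,T_2$ finite type sets with $\min\{|T_1|,|T_2|\}=2$, $T=T_1\times T_2$, and $\lambda$ a probability measure on $T$ with $\lambda(t)>0$ for all $t$, equal to the product of its marginals $\lambda_1,\lambda_2$. If an interim allocation rule $Q=(Q_1,Q_2)$, $Q_i:K\times T_i\to\mathbb{R}$, is implementable, then for all $G\subseteq K_*$, $E_1\subseteq T_1$ and $E_2\subseteq T_2$, $$\sum_{k\in G}\Big[\sum_{t_1\in E_1}Q_1^k(t_1)\lambda_1(t_1)-\sum_{t_2\in E_2}Q_2^k(t_2)\lambda_2(t_2)\Big]\le \lambda\big(E_1\times (T_2\setminus E_2)\big).$$
   Context: An ex post allocation rule $q:K\times T\to\mathbb{R}$ is feasible if $q\ge 0$ and $\sum_{k\in K}q^k(t)=1$ for all $t\in T$. An interim allocation rule $Q$ is implementable if there exists a feasible $q$ with $Q_i^k(t_i)=\sum_{t_{-i}\in T_{-i}}q^k(t)\lambda_{-i}(t_{-i})$ for all $i\in\{1,2\}$, $t_i\in T_i$, $k\in K$, where $-i$ denotes the other player. For $E\subseteq T$, $\lambda(E)=\sum_{t\in E}\lambda(t)$. *)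

theory Defs
  imports Complex_Main
begin

definition marg1 :: "('t1 \<times> 't2 \<Rightarrow> real) \<Rightarrow> 't2 set \<Rightarrow> 't1 \<Rightarrow> real" where
  "marg1 lam T2 t1 = (\<Sum>t2\<in>T2. lam (t1, t2))"

definition marg2 :: "('t1 \<times> 't2 \<Rightarrow> real) \<Rightarrow> 't1 set \<Rightarrow> 't2 \<Rightarrow> real" where
  "marg2 lam T1 t2 = (\<Sum>t1\<in>T1. lam (t1, t2))"

definition feasible :: "'k set \<Rightarrow> ('t1 \<times> 't2) set \<Rightarrow> ('k \<Rightarrow> 't1 \<times> 't2 \<Rightarrow> real) \<Rightarrow> bool" where
  "feasible K T q \<longleftrightarrow> (\<forall>k\<in>K. \<forall>t\<in>T. q k t \<ge> 0) \<and> (\<forall>t\<in>T. (\<Sum>k\<in>K. q k t) = 1)"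

definition implementable ::
  "'k set \<Rightarrow> 't1 set \<Rightarrow> 't2 set \<Rightarrow> ('t1 \<times> 't2 \<Rightarrow> real) \<Rightarrow>
   ('k \<Rightarrow> 't1 \<Rightarrow> real) \<Rightarrow> ('k \<Rightarrow> 't2 \<Rightarrow> real) \<Rightarrow> bool" where
  "implementable K T1 T2 lam Q1 Q2 \<longleftrightarrow>
     (\<exists>q. feasible K (T1 \<times> T2) q \<and>
        (\<forall>k\<in>K. \<forall>t1\<in>T1. Q1 k t1 = (\<Sum>t2\<in>T2. q k (t1, t2) * marg2 lam T1 t2)) \<and>
        (\<forall>k\<in>K. \<forall>t2\<in>T2. Q2 k t2 = (\<Sum>t1\<in>T1. q k (t1, t2) * marg1 lam T2 t1)))"

end

theory Submission
  imports Defs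
begin

text \<open>Independence of the types turns the two interim masses into the masses of the rectangles
  E1 x T2 and T1 x E2 under the weight q k t * lam t.  Their difference is at most the mass of
  E1 x (T2 - E2), because E1 x E2 lies in T1 x E2; summing over G, feasibility bounds
  (\<Sum>k\<in>G. q k t) by 1.\<close>

lemma sum_interim1_eq_sum_rectangle:
  assumes "\<forall>t1\<in>T1. \<forall>t2\<in>T2. lam (t1, t2) = marg1 lam T2 t1 * marg2 lam T1 t2"
    and "E1 \<subseteq> T1"
  shows "(\<Sum>t1\<in>E1. (\<Sum>t2\<in>T2. f (t1, t2) * marg2 lam T1 t2) * marg1 lam T2 t1)
           = (\<Sum>t\<in>E1 \<times> T2. f t * lam t)"
proof -
  have "(\<Sum>t1\<in>E1. (\<Sum>t2\<in>T2. f (t1, t2) * marg2 lam T1 t2) * marg1 lam T2 t1)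
          = (\<Sum>t1\<in>E1. \<Sum>t2\<in>T2. f (t1, t2) * lam (t1, t2))"
    using assms by (auto simp: sum_distrib_right mult.assoc intro!: sum.cong)
  then show ?thesis
    by (simp add: sum.cartesian_product)
qed

lemma sum_interim2_eq_sum_rectangle:
  assumes "\<forall>t1\<in>T1. \<forall>t2\<in>T2. lam (t1, t2) = marg1 lam T2 t1 * marg2 lam T1 t2"
    and "E2 \<subseteq> T2"
  shows "(\<Sum>t2\<in>E2. (\<Sum>t1\<in>T1. f (t1, t2) * marg1 lam T2 t1) * marg2 lam T1 t2)
           = (\<Sum>t\<in>T1 \<times> E2. f t * lam t)"
proof -
  have "(\<Sum>t2\<in>E2. (\<Sum>t1\<in>T1. f (t1, t2) * marg1 lam T2 t1) * marg2 lam T1 t2)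
          = (\<Sum>t2\<in>E2. \<Sum>t1\<in>T1. f (t1, t2) * lam (t1, t2))"
    using assms by (auto simp: sum_distrib_right mult.assoc mult.commute[of "marg1 lam T2 _"]
        intro!: sum.cong)
  also have "\<dots> = (\<Sum>t1\<in>T1. \<Sum>t2\<in>E2. f (t1, t2) * lam (t1, t2))"
    by (rule sum.swap)
  finally show ?thesis
    by (simp add: sum.cartesian_product)
qed

lemma sum_rectangle_diff_le:
  fixes w :: "'a \<times> 'b \<Rightarrow> 'c::ordered_ab_group_add"
  assumes "finite T1" and "finite T2" and "E1 \<subseteq> T1" and "E2 \<subseteq> T2"
    and "\<And>t. t \<in> T1 \<times> T2 \<Longrightarrow> 0 \<le> w t"
  shows "sum w (E1 \<times> T2) - sum w (T1 \<times> E2) \<le> sum w (E1 \<times> (T2 - E2))"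
proof -
  have fin: "finite E1" "finite E2"
    using assms(1-4) finite_subset by auto
  have split: "E1 \<times> T2 = E1 \<times> (T2 - E2) \<union> E1 \<times> E2"
    using assms(4) by blast
  have "sum w (E1 \<times> T2) = sum w (E1 \<times> (T2 - E2)) + sum w (E1 \<times> E2)"
    unfolding split using fin assms(2) by (intro sum.union_disjoint) auto
  moreover have "sum w (E1 \<times> E2) \<le> sum w (T1 \<times> E2)"
    using assms fin by (intro sum_mono2) auto
  ultimately show ?thesis
    by (simp add: algebra_simps add_left_mono)
qed

lemma interim_mass_diff_le_rectangle:
  assumes "finite T1" and "finite T2"
    and "\<forall>t1\<in>T1. \<forall>t2\<in>T2. lam (t1, t2) = marg1 lam T2 t1 * marg2 lam T1 t2"
    and "\<And>t. t \<in> T1 \<times> T2 \<Longrightarrow> 0 \<le> lam t" and "\<And>t. t \<in> T1 \<times> T2 \<Longrightarrow> 0 \<le> f t"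
    and "E1 \<subseteq> T1" and "E2 \<subseteq> T2"
  shows "(\<Sum>t1\<in>E1. (\<Sum>t2\<in>T2. f (t1, t2) * marg2 lam T1 t2) * marg1 lam T2 t1)
           - (\<Sum>t2\<in>E2. (\<Sum>t1\<in>T1. f (t1, t2) * marg1 lam T2 t1) * marg2 lam T1 t2)
         \<le> (\<Sum>t\<in>E1 \<times> (T2 - E2). f t * lam t)"
  unfolding sum_interim1_eq_sum_rectangle[OF assms(3,6)] sum_interim2_eq_sum_rectangle[OF assms(3,7)]
  using assms by (intro sum_rectangle_diff_le) auto

lemma feasible_sum_subset_le_one:
  assumes "feasible K T q" and "finite K" and "G \<subseteq> K" and "t \<in> T"
  shows "(\<Sum>k\<in>G. q k t) \<le> 1"
proof -
  have "(\<Sum>k\<in>G. q k t) \<le> (\<Sum>k\<in>K. q k t)"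
    using assms unfolding feasible_def by (intro sum_mono2) auto
  then show ?thesis
    using assms unfolding feasible_def by simp
qed

theorem lemma2:
  fixes K :: "'k set" and k0 :: 'k
    and T1 :: "'t1 set" and T2 :: "'t2 set"
    and lam :: "'t1 \<times> 't2 \<Rightarrow> real"
    and Q1 :: "'k \<Rightarrow> 't1 \<Rightarrow> real" and Q2 :: "'k \<Rightarrow> 't2 \<Rightarrow> real"
  assumes "finite K" and "k0 \<in> K"
    and "finite T1" and "finite T2"
    and "min (card T1) (card T2) = 2"
    and "\<forall>t\<in>T1 \<times> T2. lam t > 0"
    and "(\<Sum>t\<in>T1 \<times> T2. lam t) = 1"
    and "\<forall>t1\<in>T1. \<forall>t2\<in>T2. lam (t1, t2) = marg1 lam T2 t1 * marg2 lam T1 t2"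
    and "implementable K T1 T2 lam Q1 Q2"
    and "G \<subseteq> K - {k0}" and "E1 \<subseteq> T1" and "E2 \<subseteq> T2"
  shows "(\<Sum>k\<in>G. (\<Sum>t1\<in>E1. Q1 k t1 * marg1 lam T2 t1) - (\<Sum>t2\<in>E2. Q2 k t2 * marg2 lam T1 t2))
           \<le> (\<Sum>t\<in>E1 \<times> (T2 - E2). lam t)"
proof -
  obtain q where q: "feasible K (T1 \<times> T2) q"
    and Q1: "\<forall>k\<in>K. \<forall>t1\<in>T1. Q1 k t1 = (\<Sum>t2\<in>T2. q k (t1, t2) * marg2 lam T1 t2)"
    and Q2: "\<forall>k\<in>K. \<forall>t2\<in>T2. Q2 k t2 = (\<Sum>t1\<in>T1. q k (t1, t2) * marg1 lam T2 t1)"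
    using assms(9) unfolding implementable_def by blast
  have G: "G \<subseteq> K"
    using assms(10) by blast
  have "(\<Sum>t1\<in>E1. Q1 k t1 * marg1 lam T2 t1) - (\<Sum>t2\<in>E2. Q2 k t2 * marg2 lam T1 t2)
          \<le> (\<Sum>t\<in>E1 \<times> (T2 - E2). q k t * lam t)" if "k \<in> K" for k
    using interim_mass_diff_le_rectangle[OF assms(3,4,8) _ _ assms(11,12), of "q k"]
      that Q1 Q2 q assms(6,11,12)
    unfolding feasible_def by (simp add: subset_iff less_imp_le cong: sum.cong)
  then have "(\<Sum>k\<in>G. (\<Sum>t1\<in>E1. Q1 k t1 * marg1 lam T2 t1) - (\<Sum>t2\<in>E2. Q2 k t2 * marg2 lam T1 t2))
               \<le> (\<Sum>k\<in>G. \<Sum>t\<in>E1 \<times> (T2 - E2). q k t * lam t)"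
    using G by (intro sum_mono) auto
  also have "\<dots> = (\<Sum>t\<in>E1 \<times> (T2 - E2). lam t * (\<Sum>k\<in>G. q k t))"
    by (subst sum.swap) (simp add: sum_distrib_left mult.commute)
  also have "\<dots> \<le> (\<Sum>t\<in>E1 \<times> (T2 - E2). lam t)"
    using feasible_sum_subset_le_one[OF q assms(1) G] assms(6,11)
    by (intro sum_mono mult_left_le) (auto simp: less_imp_le)
  finally show ?thesis .
qed

end
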